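(* Let $G$ be a finite simple unmixed graph with vertex set $V(G)=\{t_1,\ldots,t_s\}$, let $C_1,\ldots,C_r$ be the minimal vertex covers of $G$, let $J=I_c(G)$, and let $\mathcal{G}_J$ be the graph of $J$. Then: (a) $\{C_i,C_j\}$ is an edge of $\mathcal{G}_J$ if and only if there exists an edge $\{t_k,t_\ell\}\in E(G)$ such that $t_k\in C_i$, $t_\ell\notin C_i$ and $(C_i\setminus\{t_k\})\cup\{t_\ell\}=C_j$. In particular, every non-isolated vertex of $\mathcal{G}_J$ (viewed as a vertex cover of $G$) has the exchange property. (b) $\mathcal{G}_J$ is not a discrete graph (i.e. it has at least one edge) if and only if ${\rm v}(I_c(G))=\alpha_0(G)-1$. (c) If $I_c(G)$ is linearly presented, then all minimal vertex covers of $G$ have the exchange property and ${\rm v}(I_c(G))=\alpha_0(G)-1$.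
   Context: $S=K[t_1,\ldots,t_s]$ is a polynomial ring over a field $K$ with the standard grading. A vertex cover of $G$ is a subset of $V(G)$ meeting every edge; a minimal vertex cover is an inclusion-minimal one; $\alpha_0(G)$ is the minimum size of a vertex cover. $G$ is unmixed if all minimal vertex covers have the same cardinality. The ideal of covers $I_c(G)\subset S$ is generated by the monomials $\prod_{t_i\in C}t_i$, $C$ a minimal vertex cover of $G$. A vertex cover $C$ has the exchange property if there is an edge $\{t_k,t_\ell\}$ with $t_k\in C$, $t_\ell\notin C$ and $(C\setminus\{t_k\})\cup\{t_\ell\}$ a vertex cover of $G$. For unmixed $G$, the graph $\mathcal{G}_J$ of $J=I_c(G)$ has vertex set $\{C_1,\ldots,C_r\}$, and $\{C_i,C_j\}$ ($i\ne j$) is an edge iff $|C_i\cup C_j|=|C_i|+1$. For a graded ideal $I\subset S$, the v-number is ${\rm v}(I)=\min\{d\ge 0: \exists f\in S_d,\ \exists \mathfrak p\in{\rm Ass}(I)\text{ with }(I\colon f)=\mathfrak p\}$. An ideal minimally generated by monomials $u_1,\ldots,u_r$ is linearly presented if all $u_i$ have the same degree and the kernel of $S^r\to S$, $e_i\mapsto u_i$, is generated by vectors whose entries are linear forms. *)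

theory Defs
  imports "HOL-Library.Poly_Mapping"
begin

text \<open>A finite simple graph on the vertex set UNIV of a finite type 'v
  (the vertices t_1,...,t_s); edges are 2-element subsets.\<close>

definition simple_graph :: "'v set set \<Rightarrow> bool" where
  "simple_graph E \<longleftrightarrow> (\<forall>e\<in>E. card e = 2)"

definition vertex_cover :: "'v set set \<Rightarrow> 'v set \<Rightarrow> bool" where
  "vertex_cover E C \<longleftrightarrow> (\<forall>e\<in>E. e \<inter> C \<noteq> {})"

definition minimal_vertex_cover :: "'v set set \<Rightarrow> 'v set \<Rightarrow> bool" where
  "minimal_vertex_cover E C \<longleftrightarrow> vertex_cover E C \<and> (\<forall>D. D \<subset> C \<longrightarrow> \<not> vertex_cover E D)"

definition alpha0 :: "'v set set \<Rightarrow> nat" where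
  "alpha0 E = Min (card ` {C. vertex_cover E C})"

definition unmixed :: "'v set set \<Rightarrow> bool" where
  "unmixed E \<longleftrightarrow> (\<forall>C D. minimal_vertex_cover E C \<longrightarrow> minimal_vertex_cover E D \<longrightarrow> card C = card D)"

definition exchange_property :: "'v set set \<Rightarrow> 'v set \<Rightarrow> bool" where
  "exchange_property E C \<longleftrightarrow>
     (\<exists>k l. {k, l} \<in> E \<and> k \<in> C \<and> l \<notin> C \<and> vertex_cover E ((C - {k}) \<union> {l}))"

text \<open>Edges of the graph G_J of J = I_c(G) (for unmixed G).\<close>
definition GJ_edge :: "'v set set \<Rightarrow> 'v set \<Rightarrow> 'v set \<Rightarrow> bool" where
  "GJ_edge E C D \<longleftrightarrow> minimal_vertex_cover E C \<and> minimal_vertex_cover E D \<and> C \<noteq> D \<and>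
     card (C \<union> D) = card C + 1"

definition Var :: "'v \<Rightarrow> ('v \<Rightarrow>\<^sub>0 nat) \<Rightarrow>\<^sub>0 'k::comm_ring_1" where
  "Var v = Poly_Mapping.single (Poly_Mapping.single v 1) 1"

definition mon_deg :: "('v \<Rightarrow>\<^sub>0 nat) \<Rightarrow> nat" where
  "mon_deg m = (\<Sum>v\<in>Poly_Mapping.keys m. Poly_Mapping.lookup m v)"

text \<open>f is in S_d, i.e. homogeneous of degree d (0 is in every S_d).\<close>
definition homogeneous :: "nat \<Rightarrow> (('v \<Rightarrow>\<^sub>0 nat) \<Rightarrow>\<^sub>0 'k::zero) \<Rightarrow> bool" where
  "homogeneous d f \<longleftrightarrow> (\<forall>m\<in>Poly_Mapping.keys f. mon_deg m = d)"

definition is_monomial :: "(('v \<Rightarrow>\<^sub>0 nat) \<Rightarrow>\<^sub>0 'k::{zero,one}) \<Rightarrow> bool" where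
  "is_monomial f \<longleftrightarrow> (\<exists>m. f = Poly_Mapping.single m 1)"

definition ideal_gen :: "'a::comm_ring_1 set \<Rightarrow> 'a set" where
  "ideal_gen B = {x. \<exists>F a. finite F \<and> F \<subseteq> B \<and> x = (\<Sum>b\<in>F. a b * b)}"

definition is_ideal :: "'a::comm_ring_1 set \<Rightarrow> bool" where
  "is_ideal I \<longleftrightarrow> 0 \<in> I \<and> (\<forall>x\<in>I. \<forall>y\<in>I. x + y \<in> I) \<and> (\<forall>x\<in>I. \<forall>r. r * x \<in> I)"

definition prime_ideal :: "'a::comm_ring_1 set \<Rightarrow> bool" where
  "prime_ideal P \<longleftrightarrow> is_ideal P \<and> P \<noteq> UNIV \<and> (\<forall>a b. a * b \<in> P \<longrightarrow> a \<in> P \<or> b \<in> P)"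

definition colon :: "'a::comm_ring_1 set \<Rightarrow> 'a \<Rightarrow> 'a set" where
  "colon I f = {g. g * f \<in> I}"

definition Ass :: "'a::comm_ring_1 set \<Rightarrow> 'a set set" where
  "Ass I = {P. prime_ideal P \<and> (\<exists>f. colon I f = P)}"

definition vnumber :: "(('v \<Rightarrow>\<^sub>0 nat) \<Rightarrow>\<^sub>0 'k::field) set \<Rightarrow> nat" where
  "vnumber I = (LEAST d. \<exists>f P. homogeneous d f \<and> P \<in> Ass I \<and> colon I f = P)"

definition cover_monomial :: "'v set \<Rightarrow> ('v \<Rightarrow>\<^sub>0 nat) \<Rightarrow>\<^sub>0 'k::comm_ring_1" where
  "cover_monomial C = (\<Prod>v\<in>C. Var v)"

definition Ic :: "'v set set \<Rightarrow> (('v \<Rightarrow>\<^sub>0 nat) \<Rightarrow>\<^sub>0 'k::comm_ring_1) set" where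
  "Ic E = ideal_gen {cover_monomial C | C. minimal_vertex_cover E C}"

text \<open>Vectors in S^r are indexed by the generators u \<in> U: functions U \<rightarrow> S
  (zero outside U).  The syzygy module is the kernel of e_u \<mapsto> u.\<close>

definition syzygies :: "'a::comm_ring_1 set \<Rightarrow> ('a \<Rightarrow> 'a) set" where
  "syzygies U = {a. (\<forall>u. u \<notin> U \<longrightarrow> a u = 0) \<and> (\<Sum>u\<in>U. a u * u) = 0}"

definition module_span :: "('a::comm_ring_1 \<Rightarrow> 'a) set \<Rightarrow> ('a \<Rightarrow> 'a) set" where
  "module_span W = {x. \<exists>F c. finite F \<and> F \<subseteq> W \<and> x = (\<lambda>u. \<Sum>w\<in>F. c w * w u)}"

definition minimally_generates :: "'a::comm_ring_1 set \<Rightarrow> 'a set \<Rightarrow> bool" where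
  "minimally_generates U I \<longleftrightarrow> ideal_gen U = I \<and> (\<forall>V. V \<subset> U \<longrightarrow> ideal_gen V \<noteq> I)"

definition linearly_presented :: "(('v \<Rightarrow>\<^sub>0 nat) \<Rightarrow>\<^sub>0 'k::field) set \<Rightarrow> bool" where
  "linearly_presented I \<longleftrightarrow>
     (\<exists>U. finite U \<and> minimally_generates U I \<and> (\<forall>u\<in>U. is_monomial u) \<and>
        (\<exists>d. \<forall>u\<in>U. homogeneous d u) \<and>
        syzygies U = module_span {a \<in> syzygies U. \<forall>u\<in>U. homogeneous 1 (a u)})"

end

(* Since I_c(G) is a squarefree monomial ideal, a polynomial lies in it iff the support of each
   of its monomials is a vertex cover.  Hence (I_c(G) : t^A) = (t_k, t_l) whenever {t_k, t_l} is
   the only edge missing A; for A = C - {t_k}, where C and (C - {t_k}) \<union> {t_l} are adjacent in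
   G_J, this gives v(I_c(G)) <= |C| - 1 = alpha0(G) - 1.  Conversely, if (I_c(G) : f) = p is an
   associated prime and t^m is a monomial of f outside I_c(G), then p contains t_k and t_l for an
   edge {t_k, t_l}, and supp m \<union> {t_k}, supp m \<union> {t_l} contain minimal covers C, D through t_k
   and t_l.  So deg f >= |C| - 1, with equality only if C - {t_k} = supp m = D - {t_l}, i.e. C and
   D are adjacent in G_J.  Under a linear presentation no C is isolated in G_J: t^C is then the
   only generator dividing any t_j t^C, so linear syzygies vanish at e_C and cannot generate
   t^C' e_C - t^C e_C'. *)

theory Submission
  imports Defs "HOL-Library.Countable"
begin

type_synonym ('v, 'k) mpoly = "('v \<Rightarrow>\<^sub>0 nat) \<Rightarrow>\<^sub>0 'k"

lemma keys_add_exponents: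
  fixes a b :: "'v \<Rightarrow>\<^sub>0 nat"
  shows "Poly_Mapping.keys (a + b) = Poly_Mapping.keys a \<union> Poly_Mapping.keys b"
  by (auto simp: in_keys_iff lookup_add)

lemma sum_single_lookup: "(\<Sum>m\<in>Poly_Mapping.keys g. Poly_Mapping.single m (Poly_Mapping.lookup g m)) = g"
  by (intro poly_mapping_eqI)
     (simp add: lookup_sum lookup_single when_def in_keys_iff)

lemma lookup_mult_keys:
  fixes a b :: "'a::monoid_add \<Rightarrow>\<^sub>0 'b::semiring_0"
  shows "Poly_Mapping.lookup (a * b) q =
    (\<Sum>x\<in>Poly_Mapping.keys a. \<Sum>y\<in>Poly_Mapping.keys b.
       Poly_Mapping.lookup a x * Poly_Mapping.lookup b y when x + y = q)"
proof -
  have "a * b = (\<Sum>x\<in>Poly_Mapping.keys a. Poly_Mapping.single x (Poly_Mapping.lookup a x)) *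
      (\<Sum>y\<in>Poly_Mapping.keys b. Poly_Mapping.single y (Poly_Mapping.lookup b y))"
    by (simp only: sum_single_lookup)
  also have "\<dots> = (\<Sum>x\<in>Poly_Mapping.keys a. \<Sum>y\<in>Poly_Mapping.keys b.
      Poly_Mapping.single (x + y) (Poly_Mapping.lookup a x * Poly_Mapping.lookup b y))"
    by (simp add: sum_product mult_single)
  finally show ?thesis
    by (simp add: lookup_sum lookup_single)
qed

lemma lookup_mult_single_right:
  fixes g :: "'a::cancel_comm_monoid_add \<Rightarrow>\<^sub>0 'b::semiring_1"
  shows "Poly_Mapping.lookup (g * Poly_Mapping.single m 1) (y + m) = Poly_Mapping.lookup g y"
  by (simp add: lookup_mult_keys when_def in_keys_iff cong: if_cong)

lemma keys_mult_single_right: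
  fixes g :: "'a::cancel_comm_monoid_add \<Rightarrow>\<^sub>0 'b::semiring_1"
  shows "Poly_Mapping.keys (g * Poly_Mapping.single m 1) = (\<lambda>y. y + m) ` Poly_Mapping.keys g"
proof
  show "Poly_Mapping.keys (g * Poly_Mapping.single m 1) \<subseteq> (\<lambda>y. y + m) ` Poly_Mapping.keys g"
    using keys_mult[of g "Poly_Mapping.single m 1"] by auto
  show "(\<lambda>y. y + m) ` Poly_Mapping.keys g \<subseteq> Poly_Mapping.keys (g * Poly_Mapping.single m 1)"
    by (auto simp: in_keys_iff lookup_mult_single_right)
qed

definition set_exponent :: "'v set \<Rightarrow> 'v \<Rightarrow>\<^sub>0 nat" where
  "set_exponent A = (\<Sum>v\<in>A. Poly_Mapping.single v 1)"

lemma lookup_set_exponent: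
  "finite A \<Longrightarrow> Poly_Mapping.lookup (set_exponent A) v = (if v \<in> A then 1 else 0)"
  by (simp add: set_exponent_def lookup_sum lookup_single when_def)

lemma keys_set_exponent: "finite A \<Longrightarrow> Poly_Mapping.keys (set_exponent A) = A"
  by (auto simp: in_keys_iff lookup_set_exponent split: if_splits)

lemma mon_deg_set_exponent: "finite A \<Longrightarrow> mon_deg (set_exponent A) = card A"
  by (simp add: mon_deg_def keys_set_exponent lookup_set_exponent)

lemma cover_monomial_eq_single:
  "finite C \<Longrightarrow> (cover_monomial C :: ('v, 'k::comm_ring_1) mpoly) = Poly_Mapping.single (set_exponent C) 1"
proof (induction C rule: finite_induct)
  case empty
  then show ?case by (simp add: cover_monomial_def set_exponent_def)
next
  case (insert v C)
  then show ?case by (simp add: cover_monomial_def set_exponent_def Var_def mult_single)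
qed

lemma card_keys_le_mon_deg: "card (Poly_Mapping.keys m) \<le> mon_deg m"
  unfolding mon_deg_def card_eq_sum by (intro sum_mono) (auto simp: in_keys_iff)

lemma set_exponent_keys_if_mon_deg_eq_card:
  assumes "mon_deg m = card (Poly_Mapping.keys m)"
  shows "set_exponent (Poly_Mapping.keys m) = m"
proof -
  have sum_eq: "(\<Sum>v\<in>Poly_Mapping.keys m. 1) = (\<Sum>v\<in>Poly_Mapping.keys m. Poly_Mapping.lookup m v)"
    using assms by (simp add: mon_deg_def)
  have "1 \<le> Poly_Mapping.lookup m v" if "v \<in> Poly_Mapping.keys m" for v
    using that by (simp add: in_keys_iff)
  then have "\<forall>v\<in>Poly_Mapping.keys m. Poly_Mapping.lookup m v = 1"
    using sum_mono_inv[OF sum_eq] by force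
  then show ?thesis
    by (intro poly_mapping_eqI) (auto simp: lookup_set_exponent in_keys_iff)
qed

lemma ideal_gen_base: "b \<in> B \<Longrightarrow> b \<in> ideal_gen B"
  unfolding ideal_gen_def by (intro CollectI exI[of _ "{b}"] exI[of _ "\<lambda>_. 1"]) auto

lemma ideal_gen_zero: "0 \<in> ideal_gen B"
  unfolding ideal_gen_def by (intro CollectI exI[of _ "{}"]) auto

lemma ideal_gen_add:
  assumes "x \<in> ideal_gen B" and "y \<in> ideal_gen B"
  shows "x + y \<in> ideal_gen B"
proof -
  obtain F1 a1 where F1: "finite F1" "F1 \<subseteq> B" "x = (\<Sum>b\<in>F1. a1 b * b)"
    using assms(1) unfolding ideal_gen_def by blast
  obtain F2 a2 where F2: "finite F2" "F2 \<subseteq> B" "y = (\<Sum>b\<in>F2. a2 b * b)"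
    using assms(2) unfolding ideal_gen_def by blast
  define a where "a b = (if b \<in> F1 then a1 b else 0) + (if b \<in> F2 then a2 b else 0)" for b
  have "a b * b = (if b \<in> F1 then a1 b * b else 0) + (if b \<in> F2 then a2 b * b else 0)" for b
    by (simp add: a_def distrib_right)
  then have "x + y = (\<Sum>b\<in>F1 \<union> F2. a b * b)"
    using F1 F2 by (simp add: sum.distrib sum.inter_restrict[symmetric])
  with F1(1,2) F2(1,2) show ?thesis
    unfolding ideal_gen_def by (intro CollectI exI[of _ "F1 \<union> F2"] exI[of _ a]) simp
qed

lemma ideal_gen_mult_left:
  assumes "x \<in> ideal_gen B"
  shows "r * x \<in> ideal_gen B"
proof -
  obtain F a where F: "finite F" "F \<subseteq> B" "x = (\<Sum>b\<in>F. a b * b)"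
    using assms unfolding ideal_gen_def by blast
  have "r * x = (\<Sum>b\<in>F. (r * a b) * b)"
    unfolding F(3) sum_distrib_left by (simp add: mult.assoc)
  with F(1,2) show ?thesis
    unfolding ideal_gen_def by (intro CollectI exI[of _ F] exI[of _ "\<lambda>b. r * a b"]) simp
qed

lemma ideal_gen_sum:
  "finite A \<Longrightarrow> (\<And>i. i \<in> A \<Longrightarrow> f i \<in> ideal_gen B) \<Longrightarrow> sum f A \<in> ideal_gen B"
  by (induction A rule: finite_induct) (auto intro: ideal_gen_zero ideal_gen_add)

lemma prime_ideal_prod_mem:
  assumes "prime_ideal P" and "finite A" and "prod g A \<in> P"
  shows "\<exists>v\<in>A. g v \<in> P"
  using assms(2,3)
proof (induction A rule: finite_induct)
  case empty
  then have "1 \<in> P" by simp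
  then have "r \<in> P" for r
    using assms(1) unfolding prime_ideal_def is_ideal_def by (metis mult_1_right)
  with assms(1) show ?case
    unfolding prime_ideal_def by blast
next
  case (insert v A)
  then have "g v \<in> P \<or> prod g A \<in> P"
    using assms(1) unfolding prime_ideal_def by simp
  with insert.IH show ?case by blast
qed

section \<open>Vertex covers and the graph of the ideal of covers\<close>

lemma vertex_cover_mono: "vertex_cover E A \<Longrightarrow> A \<subseteq> B \<Longrightarrow> vertex_cover E B"
  unfolding vertex_cover_def by blast

lemma minimal_vertex_cover_imp_vertex_cover:
  "minimal_vertex_cover E C \<Longrightarrow> vertex_cover E C"
  by (simp add: minimal_vertex_cover_def)

lemma obtain_minimal_vertex_cover_subset:
  assumes "finite S" and "vertex_cover E S"
  obtains C where "minimal_vertex_cover E C" and "C \<subseteq> S"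
proof -
  let ?covers = "{D. D \<subseteq> S \<and> vertex_cover E D}"
  obtain C where C: "C \<in> ?covers" and min: "\<forall>D\<in>?covers. D \<subseteq> C \<longrightarrow> C = D"
    using finite_has_minimal[of ?covers] assms by auto
  then have "minimal_vertex_cover E C"
    unfolding minimal_vertex_cover_def by blast
  with C that show ?thesis by blast
qed

lemma minimal_vertex_cover_subset_eq:
  "minimal_vertex_cover E C \<Longrightarrow> vertex_cover E A \<Longrightarrow> A \<subseteq> C \<Longrightarrow> A = C"
  unfolding minimal_vertex_cover_def by blast

lemma simple_graph_edgeE:
  assumes "simple_graph E" and "e \<in> E"
  obtains k l where "e = {k, l}" and "k \<noteq> l"
  using assms unfolding simple_graph_def by (meson card_2_iff)

lemma vertex_cover_Compl_singleton:
  "simple_graph E \<Longrightarrow> vertex_cover E (- {v})"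
  unfolding vertex_cover_def by (auto elim: simple_graph_edgeE)

lemma exists_other_minimal_vertex_cover:
  fixes E :: "'v::finite set set"
  assumes "simple_graph E" and "E \<noteq> {}"
  shows "\<exists>C'. minimal_vertex_cover E C' \<and> C' \<noteq> C"
proof -
  obtain k l where "{k, l} \<in> E" "k \<noteq> l"
    using assms by (metis all_not_in_conv simple_graph_edgeE)
  obtain Ck where Ck: "minimal_vertex_cover E Ck" "Ck \<subseteq> - {k}"
    using obtain_minimal_vertex_cover_subset[OF finite vertex_cover_Compl_singleton[OF assms(1), of k]] .
  obtain Cl where Cl: "minimal_vertex_cover E Cl" "Cl \<subseteq> - {l}"
    using obtain_minimal_vertex_cover_subset[OF finite vertex_cover_Compl_singleton[OF assms(1), of l]] .
  have "{k, l} \<inter> Ck \<noteq> {}"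
    using minimal_vertex_cover_imp_vertex_cover[OF Ck(1)] \<open>{k, l} \<in> E\<close>
    unfolding vertex_cover_def by blast
  then have "l \<in> Ck"
    using Ck(2) by blast
  with Cl(2) have "Ck \<noteq> Cl" by blast
  with Ck(1) Cl(1) show ?thesis by blast
qed

lemma alpha0_eq_card_minimal_vertex_cover:
  fixes E :: "'v::finite set set"
  assumes "unmixed E" and C: "minimal_vertex_cover E C"
  shows "alpha0 E = card C"
  unfolding alpha0_def
proof (rule Min_eqI)
  show "card C \<in> card ` {C. vertex_cover E C}"
    using C by (simp add: minimal_vertex_cover_imp_vertex_cover)
next
  fix n assume "n \<in> card ` {C. vertex_cover E C}"
  then obtain D where "vertex_cover E D" "n = card D" by blast
  moreover obtain C' where "minimal_vertex_cover E C'" "C' \<subseteq> D"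
    using obtain_minimal_vertex_cover_subset[OF finite \<open>vertex_cover E D\<close>] .
  ultimately show "card C \<le> n"
    using assms unfolding unmixed_def by (metis card_mono finite)
qed simp

lemma edge_missing_exchange:
  assumes "simple_graph E" and "vertex_cover E C" and "vertex_cover E ((C - {k}) \<union> {l})"
    and "k \<in> C" and "l \<notin> C" and "e \<in> E" and "e \<inter> (C - {k}) = {}"
  shows "e = {k, l}"
proof -
  have "k \<in> e" "l \<in> e"
    using assms(2-7) unfolding vertex_cover_def by blast+
  moreover obtain a b where "e = {a, b}" "a \<noteq> b"
    using assms(1,6) by (rule simple_graph_edgeE)
  ultimately show ?thesis
    using assms(4,5) by auto
qed

lemma GJ_edge_if_Diff_eq:
  fixes E :: "'v::finite set set"
  assumes "minimal_vertex_cover E C" and "minimal_vertex_cover E D"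
    and "k \<in> C" and "l \<in> D" and "k \<noteq> l" and "C - {k} = D - {l}"
  shows "GJ_edge E C D"
proof -
  have "l \<notin> C" and "C \<union> D = insert l C"
    using assms(3-6) by blast+
  then have "card (C \<union> D) = card C + 1"
    by simp
  moreover have "C \<noteq> D"
    using \<open>l \<notin> C\<close> assms(4) by blast
  ultimately show ?thesis
    using assms(1,2) unfolding GJ_edge_def by blast
qed

lemma GJ_edge_iff_exchange:
  fixes E :: "'v::finite set set"
  assumes "simple_graph E" and "unmixed E"
    and C: "minimal_vertex_cover E C" and D: "minimal_vertex_cover E D"
  shows "GJ_edge E C D \<longleftrightarrow> (\<exists>k l. {k, l} \<in> E \<and> k \<in> C \<and> l \<notin> C \<and> (C - {k}) \<union> {l} = D)"
proof
  assume G: "GJ_edge E C D"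
  have "card (C \<union> D) = card C + card (D - C)"
    using card_Un_disjoint[of C "D - C"] by simp
  moreover have "card (C \<union> D) = card D + card (C - D)"
    using card_Un_disjoint[of D "C - D"] by (simp add: Un_commute)
  moreover have "card D = card C"
    using assms(2) C D unfolding unmixed_def by blast
  moreover have "card (C \<union> D) = card C + 1"
    using G unfolding GJ_edge_def by blast
  ultimately have "card (C - D) = 1" "card (D - C) = 1"
    by simp_all
  then obtain k l where k: "C - D = {k}" and l: "D - C = {l}"
    by (meson card_1_singletonE)
  then have kl: "k \<in> C" "l \<notin> C" and D_eq: "(C - {k}) \<union> {l} = D"
    by blast+
  obtain e where "e \<in> E" "e \<inter> (C - {k}) = {}"
    using C kl(1) unfolding minimal_vertex_cover_def vertex_cover_def by blast
  then have "e = {k, l}"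
    using edge_missing_exchange[OF assms(1)] C D kl D_eq
    by (metis minimal_vertex_cover_imp_vertex_cover)
  with \<open>e \<in> E\<close> kl D_eq show "\<exists>k l. {k, l} \<in> E \<and> k \<in> C \<and> l \<notin> C \<and> (C - {k}) \<union> {l} = D"
    by blast
next
  assume "\<exists>k l. {k, l} \<in> E \<and> k \<in> C \<and> l \<notin> C \<and> (C - {k}) \<union> {l} = D"
  then obtain k l where "k \<in> C" "l \<notin> C" "(C - {k}) \<union> {l} = D" by blast
  then show "GJ_edge E C D"
    by (intro GJ_edge_if_Diff_eq[OF C D, of k l]) auto
qed

lemma exchange_property_if_GJ_edge:
  fixes E :: "'v::finite set set"
  assumes "simple_graph E" and "unmixed E" and G: "GJ_edge E C D"
  shows "exchange_property E C"
proof -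
  have C: "minimal_vertex_cover E C" and D: "minimal_vertex_cover E D"
    using G unfolding GJ_edge_def by auto
  then obtain k l where "{k, l} \<in> E" "k \<in> C" "l \<notin> C" "(C - {k}) \<union> {l} = D"
    using G GJ_edge_iff_exchange[OF assms(1,2)] by blast
  with minimal_vertex_cover_imp_vertex_cover[OF D] show ?thesis
    unfolding exchange_property_def by blast
qed

section \<open>Membership in the ideal of covers\<close>

lemma cover_monomial_mem_Ic:
  "minimal_vertex_cover E C \<Longrightarrow> cover_monomial C \<in> Ic E"
  unfolding Ic_def by (intro ideal_gen_base) blast

lemma mem_Ic_iff:
  fixes E :: "'v::finite set set" and g :: "('v, 'k::comm_ring_1) mpoly"
  shows "g \<in> Ic E \<longleftrightarrow> (\<forall>m\<in>Poly_Mapping.keys g. vertex_cover E (Poly_Mapping.keys m))"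
proof
  assume "g \<in> Ic E"
  then obtain F a where F: "finite F" "F \<subseteq> {cover_monomial C | C. minimal_vertex_cover E C}"
      "g = (\<Sum>b\<in>F. a b * b)"
    unfolding Ic_def ideal_gen_def by blast
  show "\<forall>m\<in>Poly_Mapping.keys g. vertex_cover E (Poly_Mapping.keys m)"
  proof
    fix m assume "m \<in> Poly_Mapping.keys g"
    then obtain b where b: "b \<in> F" "m \<in> Poly_Mapping.keys (a b * b)"
      using keys_sum[of "\<lambda>b. a b * b" F] F(3) by blast
    obtain C where C: "minimal_vertex_cover E C" "b = Poly_Mapping.single (set_exponent C) 1"
      using b(1) F(2) by (auto simp: cover_monomial_eq_single)
    then obtain y where "m = y + set_exponent C"
      using b(2) by (auto simp: keys_mult_single_right)
    then have "C \<subseteq> Poly_Mapping.keys m"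
      by (simp add: keys_add_exponents keys_set_exponent)
    with C(1) show "vertex_cover E (Poly_Mapping.keys m)"
      by (blast intro: vertex_cover_mono minimal_vertex_cover_imp_vertex_cover)
  qed
next
  assume covers: "\<forall>m\<in>Poly_Mapping.keys g. vertex_cover E (Poly_Mapping.keys m)"
  have "Poly_Mapping.single m (Poly_Mapping.lookup g m) \<in> Ic E" if "m \<in> Poly_Mapping.keys g" for m
  proof -
    from covers that have "vertex_cover E (Poly_Mapping.keys m)" by blast
    then obtain C where C: "minimal_vertex_cover E C" "C \<subseteq> Poly_Mapping.keys m"
      by (rule obtain_minimal_vertex_cover_subset[OF finite_keys])
    then have "(m - set_exponent C) + set_exponent C = m"
      by (intro poly_mapping_eqI)
         (auto simp: lookup_add lookup_minus lookup_set_exponent in_keys_iff)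
    then have factor: "Poly_Mapping.single (m - set_exponent C) (Poly_Mapping.lookup g m) * cover_monomial C =
        Poly_Mapping.single m (Poly_Mapping.lookup g m)"
      by (simp only: cover_monomial_eq_single[OF finite] mult_single mult_1_right)
    show ?thesis
      unfolding factor[symmetric] Ic_def
      by (rule ideal_gen_mult_left[OF cover_monomial_mem_Ic[OF C(1), unfolded Ic_def]])
  qed
  then have "(\<Sum>m\<in>Poly_Mapping.keys g. Poly_Mapping.single m (Poly_Mapping.lookup g m)) \<in> Ic E"
    unfolding Ic_def by (intro ideal_gen_sum) auto
  then show "g \<in> Ic E" by (simp only: sum_single_lookup)
qed

lemma colon_Ic_set_exponent:
  fixes E :: "'v::finite set set"
  shows "colon (Ic E :: ('v, 'k::comm_ring_1) mpoly set) (Poly_Mapping.single (set_exponent A) 1) =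
    {g. \<forall>m\<in>Poly_Mapping.keys g. vertex_cover E (Poly_Mapping.keys m \<union> A)}"
  by (auto simp: colon_def mem_Ic_iff keys_mult_single_right keys_add_exponents keys_set_exponent)

lemma Ic_subset_colon: "Ic E \<subseteq> colon (Ic E) (f :: ('v, 'k::comm_ring_1) mpoly)"
proof
  fix x :: "('v, 'k) mpoly"
  assume "x \<in> Ic E"
  then have "f * x \<in> Ic E"
    unfolding Ic_def by (rule ideal_gen_mult_left)
  then show "x \<in> colon (Ic E) f"
    by (simp add: colon_def mult.commute)
qed

section \<open>Monomial prime ideals\<close>

text \<open>The monomial prime ideal (t_v : v \<in> V).\<close>
definition var_ideal :: "'v set \<Rightarrow> ('v, 'k::comm_ring_1) mpoly set" where
  "var_ideal V = {g. \<forall>m\<in>Poly_Mapping.keys g. Poly_Mapping.keys m \<inter> V \<noteq> {}}"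

text \<open>Renaming the variables along \<^const>\<open>to_nat\<close> transfers the linear order of
  \<^typ>\<open>nat \<Rightarrow>\<^sub>0 nat\<close>, which is compatible with addition, to exponent vectors; it plays the
  role of a monomial order in the proof that \<^const>\<open>var_ideal\<close> is prime.\<close>
definition nat_exponent :: "('v::finite \<Rightarrow>\<^sub>0 nat) \<Rightarrow> nat \<Rightarrow>\<^sub>0 nat" where
  "nat_exponent m = (\<Sum>v\<in>UNIV. Poly_Mapping.single (to_nat v) (Poly_Mapping.lookup m v))"

lemma nat_exponent_add: "nat_exponent (x + y) = nat_exponent x + nat_exponent y"
  by (simp add: nat_exponent_def lookup_add single_add sum.distrib)

lemma lookup_nat_exponent: "Poly_Mapping.lookup (nat_exponent m) (to_nat v) = Poly_Mapping.lookup m v"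
  by (simp add: nat_exponent_def lookup_sum lookup_single when_def)

lemma nat_exponent_inject: "nat_exponent x = nat_exponent y \<longleftrightarrow> x = y"
  by (metis lookup_nat_exponent poly_mapping_eqI)

lemma keys_mult_avoiding:
  fixes a b :: "('v::finite, 'k::idom) mpoly"
  assumes "x \<in> Poly_Mapping.keys a" "Poly_Mapping.keys x \<inter> V = {}"
    and "y \<in> Poly_Mapping.keys b" "Poly_Mapping.keys y \<inter> V = {}"
  shows "\<exists>z\<in>Poly_Mapping.keys (a * b). Poly_Mapping.keys z \<inter> V = {}"
proof -
  define avoiding where "avoiding g = {x\<in>Poly_Mapping.keys g. Poly_Mapping.keys x \<inter> V = {}}"
    for g :: "('v, 'k) mpoly"
  have max: "\<exists>x\<in>avoiding g. \<forall>y\<in>avoiding g. nat_exponent y \<le> nat_exponent x"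
    if "avoiding g \<noteq> {}" for g
  proof -
    have "finite (avoiding g)" by (simp add: avoiding_def)
    with that have "Max (nat_exponent ` avoiding g) \<in> nat_exponent ` avoiding g" by simp
    with \<open>finite (avoiding g)\<close> show ?thesis by (metis Max_ge finite_imageI imageE imageI)
  qed
  obtain xa where xa: "xa \<in> avoiding a" "\<forall>x\<in>avoiding a. nat_exponent x \<le> nat_exponent xa"
    using max[of a] assms(1,2) by (auto simp: avoiding_def)
  obtain xb where xb: "xb \<in> avoiding b" "\<forall>y\<in>avoiding b. nat_exponent y \<le> nat_exponent xb"
    using max[of b] assms(3,4) by (auto simp: avoiding_def)
  have unique: "x = xa \<and> y = xb"
    if "x \<in> Poly_Mapping.keys a" "y \<in> Poly_Mapping.keys b" "x + y = xa + xb" for x y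
  proof -
    have "Poly_Mapping.keys x \<union> Poly_Mapping.keys y = Poly_Mapping.keys xa \<union> Poly_Mapping.keys xb"
      using that(3) by (metis keys_add_exponents)
    then have "x \<in> avoiding a" "y \<in> avoiding b"
      using that(1,2) xa(1) xb(1) unfolding avoiding_def by blast+
    then have le: "nat_exponent x \<le> nat_exponent xa" "nat_exponent y \<le> nat_exponent xb"
      using xa(2) xb(2) by blast+
    have "nat_exponent x + nat_exponent y = nat_exponent xa + nat_exponent xb"
      using that(3) by (metis nat_exponent_add)
    with le have "nat_exponent x = nat_exponent xa"
      by (metis add_less_le_mono order_le_less less_irrefl)
    with that(3) show ?thesis
      by (simp add: nat_exponent_inject)
  qed
  \<comment> \<open>the maximal avoiding exponents are the only pair adding up to xa + xb, so no cancellation\<close>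
  have "Poly_Mapping.lookup (a * b) (xa + xb) = (\<Sum>x\<in>Poly_Mapping.keys a. \<Sum>y\<in>Poly_Mapping.keys b.
      if x = xa \<and> y = xb then Poly_Mapping.lookup a xa * Poly_Mapping.lookup b xb else 0)"
    unfolding lookup_mult_keys by (intro sum.cong refl) (auto simp: when_def dest: unique)
  also have "\<dots> = (\<Sum>x\<in>Poly_Mapping.keys a.
      if x = xa then Poly_Mapping.lookup a xa * Poly_Mapping.lookup b xb else 0)"
    using xb(1) by (intro sum.cong refl) (auto simp: avoiding_def)
  also have "\<dots> = Poly_Mapping.lookup a xa * Poly_Mapping.lookup b xb"
    using xa(1) by (simp add: avoiding_def)
  also have "\<dots> \<noteq> 0"
    using xa(1) xb(1) by (simp add: avoiding_def in_keys_iff)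
  finally have "xa + xb \<in> Poly_Mapping.keys (a * b)"
    by (simp add: in_keys_iff)
  moreover have "Poly_Mapping.keys (xa + xb) \<inter> V = {}"
    using xa(1) xb(1) by (auto simp: avoiding_def keys_add_exponents)
  ultimately show ?thesis by blast
qed

lemma prime_ideal_var_ideal: "prime_ideal (var_ideal V :: ('v::finite, 'k::idom) mpoly set)"
proof -
  have mult: "r * g \<in> var_ideal V" if "g \<in> var_ideal V" for r g :: "('v, 'k) mpoly"
    using that keys_mult[of r g] by (fastforce simp: var_ideal_def keys_add_exponents)
  have prime: "a \<in> var_ideal V \<or> b \<in> var_ideal V" if "a * b \<in> var_ideal V" for a b :: "('v, 'k) mpoly"
    using that keys_mult_avoiding[of _ a V _ b] unfolding var_ideal_def by blast
  have add: "g + h \<in> var_ideal V" if "g \<in> var_ideal V" "h \<in> var_ideal V" for g h :: "('v, 'k) mpoly"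
    using that keys_add[of g h] unfolding var_ideal_def by blast
  have "0 \<in> var_ideal V" "1 \<notin> var_ideal V"
    by (simp_all add: var_ideal_def)
  with mult prime add show ?thesis
    unfolding prime_ideal_def is_ideal_def by blast
qed

lemma colon_Ic_eq_var_ideal:
  fixes E :: "'v::finite set set"
  assumes "{k, l} \<in> E" and "k \<notin> A" and "l \<notin> A"
    and unique: "\<forall>e\<in>E. e \<inter> A = {} \<longrightarrow> e = {k, l}"
  shows "colon (Ic E :: ('v, 'k::comm_ring_1) mpoly set) (Poly_Mapping.single (set_exponent A) 1) =
    var_ideal {k, l}"
proof -
  have "vertex_cover E (M \<union> A) \<longleftrightarrow> M \<inter> {k, l} \<noteq> {}" for M
  proof
    assume "vertex_cover E (M \<union> A)"
    then have "{k, l} \<inter> (M \<union> A) \<noteq> {}"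
      using assms(1) unfolding vertex_cover_def by blast
    with assms(2,3) show "M \<inter> {k, l} \<noteq> {}" by blast
  next
    assume "M \<inter> {k, l} \<noteq> {}"
    with unique show "vertex_cover E (M \<union> A)"
      unfolding vertex_cover_def by blast
  qed
  then show ?thesis
    by (simp add: colon_Ic_set_exponent var_ideal_def Int_commute)
qed

lemma prime_over_Ic_contains_edge:
  fixes E :: "'v::finite set set"
  assumes "prime_ideal P" and "Ic E \<subseteq> P"
  shows "\<exists>e\<in>E. \<forall>v\<in>e. Var v \<in> P"
proof (rule ccontr)
  assume "\<not> (\<exists>e\<in>E. \<forall>v\<in>e. Var v \<in> P)"
  then have "vertex_cover E {v. Var v \<notin> P}"
    unfolding vertex_cover_def by blast
  then obtain C where C: "minimal_vertex_cover E C" "C \<subseteq> {v. Var v \<notin> P}"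
    by (rule obtain_minimal_vertex_cover_subset[OF finite])
  have "prod Var C \<in> P"
    using cover_monomial_mem_Ic[OF C(1)] assms(2) by (auto simp: cover_monomial_def)
  with C(2) show False
    using prime_ideal_prod_mem[OF assms(1) finite] by blast
qed

section \<open>The v-number\<close>

definition ass_degree :: "('v, 'k::field) mpoly set \<Rightarrow> nat \<Rightarrow> bool" where
  "ass_degree I d \<longleftrightarrow> (\<exists>f. homogeneous d f \<and> colon I f \<in> Ass I)"

lemma vnumber_eq_Least_ass_degree: "vnumber I = (LEAST d. ass_degree I d)"
  by (simp add: vnumber_def ass_degree_def)

lemma obtain_exchange_cover:
  fixes E :: "'v::finite set set" and f :: "('v, 'k::comm_ring_1) mpoly"
  assumes m: "m \<in> Poly_Mapping.keys f" "\<not> vertex_cover E (Poly_Mapping.keys m)"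
    and "Var v * f \<in> Ic E"
  obtains C where "minimal_vertex_cover E C" and "v \<in> C"
    and "C - {v} \<subseteq> Poly_Mapping.keys m" and "v \<notin> Poly_Mapping.keys m"
proof -
  have "f * Poly_Mapping.single (Poly_Mapping.single v 1) 1 \<in> Ic E"
    using assms(3) by (simp add: Var_def mult.commute)
  moreover have "m + Poly_Mapping.single v 1 \<in> Poly_Mapping.keys (f * Poly_Mapping.single (Poly_Mapping.single v 1) 1)"
    using m(1) by (simp add: keys_mult_single_right)
  ultimately have cover: "vertex_cover E (insert v (Poly_Mapping.keys m))"
    by (auto simp: mem_Ic_iff keys_add_exponents)
  with m(2) have "v \<notin> Poly_Mapping.keys m"
    by (metis insert_absorb)
  obtain C where C: "minimal_vertex_cover E C" "C \<subseteq> insert v (Poly_Mapping.keys m)"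
    using obtain_minimal_vertex_cover_subset[OF finite cover] .
  have "v \<in> C"
    using C m(2) vertex_cover_mono[OF minimal_vertex_cover_imp_vertex_cover[OF C(1)]] by blast
  with C \<open>v \<notin> Poly_Mapping.keys m\<close> that show ?thesis by blast
qed

lemma ass_degree_lower_bound:
  fixes E :: "'v::finite set set"
  assumes "simple_graph E" and "unmixed E" and "ass_degree (Ic E :: ('v, 'k::field) mpoly set) d"
  shows "alpha0 E - 1 \<le> d" and "d = alpha0 E - 1 \<Longrightarrow> \<exists>C D. GJ_edge E C D"
proof -
  obtain f where f: "homogeneous d f" and ass: "colon (Ic E :: ('v, 'k) mpoly set) f \<in> Ass (Ic E)"
    using assms(3) unfolding ass_degree_def by blast
  have prime: "prime_ideal (colon (Ic E :: ('v, 'k) mpoly set) f)"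
    using ass by (simp add: Ass_def)
  have "f \<notin> Ic E"
  proof
    assume "f \<in> Ic E"
    then have "colon (Ic E) f = UNIV"
      unfolding colon_def Ic_def by (auto intro: ideal_gen_mult_left)
    with prime show False by (simp add: prime_ideal_def)
  qed
  then obtain m where m: "m \<in> Poly_Mapping.keys f" "\<not> vertex_cover E (Poly_Mapping.keys m)"
    by (auto simp: mem_Ic_iff)
  obtain e where "e \<in> E" and e_vars: "\<forall>v\<in>e. Var v * f \<in> Ic E"
    using prime_over_Ic_contains_edge[OF prime Ic_subset_colon] by (auto simp: colon_def)
  then obtain k l where kl: "e = {k, l}" "k \<noteq> l"
    using assms(1) by (blast elim: simple_graph_edgeE)
  \<comment> \<open>t_v f \<in> J makes supp m \<union> {v} a cover, so supp m misses some minimal cover only at v\<close>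
  obtain C where C: "minimal_vertex_cover E C" "k \<in> C" "C - {k} \<subseteq> Poly_Mapping.keys m"
    "k \<notin> Poly_Mapping.keys m"
    using obtain_exchange_cover[OF m] e_vars kl by blast
  obtain D where D: "minimal_vertex_cover E D" "l \<in> D" "D - {l} \<subseteq> Poly_Mapping.keys m"
    using obtain_exchange_cover[OF m] e_vars kl by blast
  have card_C: "card (C - {k}) = alpha0 E - 1" and card_D: "card (D - {l}) = alpha0 E - 1"
    using C(2) D(2) alpha0_eq_card_minimal_vertex_cover[OF assms(2) C(1)]
      alpha0_eq_card_minimal_vertex_cover[OF assms(2) D(1)] by simp_all
  have deg: "card (Poly_Mapping.keys m) \<le> d"
    using card_keys_le_mon_deg[of m] f m(1) by (simp add: homogeneous_def)
  show "alpha0 E - 1 \<le> d"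
    using card_mono[OF finite_keys C(3)] card_C deg by simp
  assume "d = alpha0 E - 1"
  then have "C - {k} = Poly_Mapping.keys m" and "D - {l} = Poly_Mapping.keys m"
    using card_seteq[OF finite_keys C(3)] card_seteq[OF finite_keys D(3)] card_C card_D deg
    by simp_all
  then show "\<exists>C D. GJ_edge E C D"
    using GJ_edge_if_Diff_eq[OF C(1) D(1) C(2) D(2) kl(2)] by auto
qed

lemma ass_degree_card_if_unique_missing_edge:
  fixes E :: "'v::finite set set"
  assumes "{k, l} \<in> E" and "k \<notin> A" and "l \<notin> A"
    and "\<forall>e\<in>E. e \<inter> A = {} \<longrightarrow> e = {k, l}"
  shows "ass_degree (Ic E :: ('v, 'k::field) mpoly set) (card A)"
proof -
  have "prime_ideal (colon (Ic E :: ('v, 'k) mpoly set) (Poly_Mapping.single (set_exponent A) 1))"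
    unfolding colon_Ic_eq_var_ideal[OF assms] by (rule prime_ideal_var_ideal)
  then have "colon (Ic E :: ('v, 'k) mpoly set) (Poly_Mapping.single (set_exponent A) 1) \<in> Ass (Ic E)"
    unfolding Ass_def by blast
  moreover have "homogeneous (card A) (Poly_Mapping.single (set_exponent A) (1::'k))"
    by (simp add: homogeneous_def mon_deg_set_exponent)
  ultimately show ?thesis
    unfolding ass_degree_def by blast
qed

lemma ass_degree_of_GJ_edge:
  fixes E :: "'v::finite set set"
  assumes "simple_graph E" and "unmixed E" and "GJ_edge E C D"
  shows "ass_degree (Ic E :: ('v, 'k::field) mpoly set) (alpha0 E - 1)"
proof -
  have C: "minimal_vertex_cover E C" and D: "minimal_vertex_cover E D"
    using assms(3) unfolding GJ_edge_def by auto
  obtain k l where kl: "{k, l} \<in> E" "k \<in> C" "l \<notin> C" "(C - {k}) \<union> {l} = D"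
    using assms GJ_edge_iff_exchange[OF assms(1,2) C D] by blast
  have covers: "vertex_cover E C" "vertex_cover E ((C - {k}) \<union> {l})"
    using C D kl(4) by (simp_all add: minimal_vertex_cover_imp_vertex_cover)
  have unique: "\<forall>e\<in>E. e \<inter> (C - {k}) = {} \<longrightarrow> e = {k, l}"
    using edge_missing_exchange[OF assms(1) covers kl(2,3)] by blast
  have "ass_degree (Ic E :: ('v, 'k) mpoly set) (card (C - {k}))"
    using ass_degree_card_if_unique_missing_edge[OF kl(1) _ _ unique] kl(3) by blast
  then show ?thesis
    using alpha0_eq_card_minimal_vertex_cover[OF assms(2) C] kl(2) by simp
qed

text \<open>Without a witness the \<^const>\<open>Least\<close> in \<^const>\<open>vnumber\<close> would be an unspecified value.\<close>
lemma ex_ass_degree: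
  fixes E :: "'v::finite set set"
  assumes "simple_graph E" and "E \<noteq> {}"
  shows "\<exists>d. ass_degree (Ic E :: ('v, 'k::field) mpoly set) d"
proof -
  obtain k l where "{k, l} \<in> E" "k \<noteq> l"
    using assms by (metis all_not_in_conv simple_graph_edgeE)
  moreover have "\<forall>e\<in>E. e \<inter> - {k, l} = {} \<longrightarrow> e = {k, l}"
    using assms(1) \<open>k \<noteq> l\<close> by (auto elim!: simple_graph_edgeE)
  ultimately have "ass_degree (Ic E :: ('v, 'k) mpoly set) (card (- {k, l}))"
    using ass_degree_card_if_unique_missing_edge[of k l E "- {k, l}"] by blast
  then show ?thesis ..
qed

theorem vnumber_Ic_eq_iff_GJ_edge:
  fixes E :: "'v::finite set set"
  assumes "simple_graph E" and "E \<noteq> {}" and "unmixed E"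
  shows "(\<exists>C D. GJ_edge E C D) \<longleftrightarrow> vnumber (Ic E :: ('v, 'k::field) mpoly set) = alpha0 E - 1"
  unfolding vnumber_eq_Least_ass_degree
proof
  assume "\<exists>C D. GJ_edge E C D"
  then show "(LEAST d. ass_degree (Ic E :: ('v, 'k) mpoly set) d) = alpha0 E - 1"
    using ass_degree_of_GJ_edge[OF assms(1,3)] ass_degree_lower_bound(1)[OF assms(1,3)]
    by (metis (no_types, lifting) Least_equality)
next
  assume least: "(LEAST d. ass_degree (Ic E :: ('v, 'k) mpoly set) d) = alpha0 E - 1"
  have "\<exists>d. ass_degree (Ic E :: ('v, 'k) mpoly set) d"
    by (rule ex_ass_degree[OF assms(1,2)])
  then have "ass_degree (Ic E :: ('v, 'k) mpoly set) (alpha0 E - 1)"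
    unfolding least[symmetric] by (rule LeastI_ex)
  then show "\<exists>C D. GJ_edge E C D"
    by (rule ass_degree_lower_bound(2)[OF assms(1,3)]) simp
qed

section \<open>Linear presentation\<close>

lemma cover_monomial_mem_monomial_generators:
  fixes E :: "'v::finite set set"
  assumes gen: "ideal_gen U = (Ic E :: ('v, 'k::comm_ring_1) mpoly set)"
    and mon: "\<forall>u\<in>U. is_monomial u" and C: "minimal_vertex_cover E C"
  shows "Poly_Mapping.single (set_exponent C) 1 \<in> U"
proof -
  obtain F a where F: "finite F" "F \<subseteq> U"
    "Poly_Mapping.single (set_exponent C) 1 = (\<Sum>b\<in>F. a b * b)"
  proof -
    have "Poly_Mapping.single (set_exponent C) 1 \<in> ideal_gen U"
      using cover_monomial_mem_Ic[OF C] gen by (simp add: cover_monomial_eq_single)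
    with that show ?thesis
      unfolding ideal_gen_def by blast
  qed
  have "set_exponent C \<in> Poly_Mapping.keys (\<Sum>b\<in>F. a b * b)"
    unfolding F(3)[symmetric] by simp
  then obtain b where b: "b \<in> F" "set_exponent C \<in> Poly_Mapping.keys (a b * b)"
    using keys_sum[of "\<lambda>b. a b * b" F] by blast
  obtain mb where mb: "b = Poly_Mapping.single mb 1"
    using mon b(1) F(2) unfolding is_monomial_def by blast
  then obtain y where y: "y + mb = set_exponent C"
    using b(2) by (auto simp: keys_mult_single_right)
  have "b \<in> Ic E"
    using b(1) F(2) gen ideal_gen_base by blast
  then have "vertex_cover E (Poly_Mapping.keys mb)"
    by (simp add: mb mem_Ic_iff)
  moreover have "Poly_Mapping.keys mb \<subseteq> C"
    using y by (metis keys_add_exponents keys_set_exponent finite Un_upper2)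
  ultimately have keys_mb: "Poly_Mapping.keys mb = C"
    using C by (rule minimal_vertex_cover_subset_eq[rotated])
  have "mb = set_exponent C"
  proof (rule poly_mapping_eqI)
    fix v
    have "Poly_Mapping.lookup y v + Poly_Mapping.lookup mb v = (if v \<in> C then 1 else 0)"
      using arg_cong[OF y, of "\<lambda>m. Poly_Mapping.lookup m v"] by (simp add: lookup_add lookup_set_exponent)
    then show "Poly_Mapping.lookup mb v = Poly_Mapping.lookup (set_exponent C) v"
      using keys_mb by (auto simp: lookup_set_exponent in_keys_iff split: if_splits)
  qed
  with b(1) F(2) mb show ?thesis by blast
qed

lemma isolated_cover_unique_dividing_exponent:
  fixes E :: "'v::finite set set"
  assumes C: "minimal_vertex_cover E C" and isolated: "\<forall>D. \<not> GJ_edge E C D"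
    and cover: "vertex_cover E (Poly_Mapping.keys m)" and deg: "mon_deg m = card C"
    and keys_m: "Poly_Mapping.keys m \<subseteq> Poly_Mapping.keys x \<union> C"
    and x: "card (Poly_Mapping.keys x) \<le> 1"
  shows "m = set_exponent C"
proof -
  obtain C' where C': "minimal_vertex_cover E C'" "C' \<subseteq> Poly_Mapping.keys m"
    using obtain_minimal_vertex_cover_subset[OF finite_keys cover] .
  have bound: "card (C \<union> C') \<le> card C + 1"
  proof -
    have "card (C \<union> C') \<le> card (Poly_Mapping.keys x \<union> C)"
      using C'(2) keys_m by (intro card_mono) auto
    also have "\<dots> \<le> card (Poly_Mapping.keys x) + card C"
      by (rule card_Un_le)
    finally show ?thesis
      using x by simp
  qed
  \<comment> \<open>any other minimal cover inside supp m would be adjacent to C in G_J\<close>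
  have "C' = C"
  proof (rule ccontr)
    assume "C' \<noteq> C"
    then have "\<not> C' \<subseteq> C"
      using minimal_vertex_cover_subset_eq[OF C minimal_vertex_cover_imp_vertex_cover[OF C'(1)]] by blast
    then have "card C < card (C \<union> C')"
      by (intro psubset_card_mono) auto
    with bound have "GJ_edge E C C'"
      using C C'(1) \<open>C' \<noteq> C\<close> unfolding GJ_edge_def by simp
    with isolated show False by blast
  qed
  with C'(2) have "C \<subseteq> Poly_Mapping.keys m" by simp
  moreover have "card (Poly_Mapping.keys m) \<le> card C"
    using card_keys_le_mon_deg[of m] deg by simp
  ultimately have "Poly_Mapping.keys m = C"
    by (intro card_seteq[symmetric]) auto
  with deg show ?thesis
    using set_exponent_keys_if_mon_deg_eq_card by metis
qed

lemma linear_syzygy_vanishes_at_isolated_cover: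
  fixes E :: "'v::finite set set"
  assumes gen: "ideal_gen U = (Ic E :: ('v, 'k::field) mpoly set)" and "finite U"
    and mon: "\<forall>u\<in>U. is_monomial u" and hom: "\<forall>u\<in>U. homogeneous d u"
    and C: "minimal_vertex_cover E C" and isolated: "\<forall>D. \<not> GJ_edge E C D"
    and w: "w \<in> syzygies U" "\<forall>u\<in>U. homogeneous 1 (w u)"
  shows "w (Poly_Mapping.single (set_exponent C) 1) = 0"
proof (rule ccontr)
  let ?uC = "Poly_Mapping.single (set_exponent C) 1 :: ('v, 'k) mpoly"
  assume "w ?uC \<noteq> 0"
  then obtain x where x: "x \<in> Poly_Mapping.keys (w ?uC)"
    by fastforce
  have uC: "?uC \<in> U"
    by (rule cover_monomial_mem_monomial_generators[OF gen mon C])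
  then have "homogeneous d ?uC"
    using hom by blast
  then have "d = card C"
    by (simp add: homogeneous_def mon_deg_set_exponent)
  have "card (Poly_Mapping.keys x) \<le> 1"
    using w(2) uC x card_keys_le_mon_deg[of x] unfolding homogeneous_def by fastforce
  \<comment> \<open>compare the coefficients of t^x t^C in the syzygy relation: only u = t^C contributes\<close>
  define q where "q = x + set_exponent C"
  have "q \<notin> Poly_Mapping.keys (w u * u)" if u: "u \<in> U" "u \<noteq> ?uC" for u
  proof
    assume "q \<in> Poly_Mapping.keys (w u * u)"
    obtain m where m: "u = Poly_Mapping.single m 1"
      using mon u(1) unfolding is_monomial_def by blast
    then obtain y where "y + m = q"
      using \<open>q \<in> Poly_Mapping.keys (w u * u)\<close> by (auto simp: keys_mult_single_right)
    then have "Poly_Mapping.keys y \<union> Poly_Mapping.keys m = Poly_Mapping.keys x \<union> C"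
      unfolding q_def by (metis keys_add_exponents keys_set_exponent finite)
    then have "Poly_Mapping.keys m \<subseteq> Poly_Mapping.keys x \<union> C"
      by blast
    moreover have "vertex_cover E (Poly_Mapping.keys m)"
      using u(1) gen ideal_gen_base[OF u(1)] by (simp add: m mem_Ic_iff)
    moreover have "mon_deg m = card C"
      using hom u(1) \<open>d = card C\<close> by (simp add: m homogeneous_def)
    ultimately have "m = set_exponent C"
      using isolated_cover_unique_dividing_exponent[OF C isolated] \<open>card (Poly_Mapping.keys x) \<le> 1\<close>
      by blast
    with u(2) m show False by simp
  qed
  then have others: "Poly_Mapping.lookup (w u * u) q = 0" if "u \<in> U - {?uC}" for u
    using that by (simp add: in_keys_iff)
  have "0 = Poly_Mapping.lookup (\<Sum>u\<in>U. w u * u) q"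
    using w(1) unfolding syzygies_def by simp
  also have "\<dots> = Poly_Mapping.lookup (w ?uC * ?uC) q + (\<Sum>u\<in>U - {?uC}. Poly_Mapping.lookup (w u * u) q)"
    using \<open>finite U\<close> uC by (simp add: lookup_sum lookup_add sum.remove)
  also have "\<dots> = Poly_Mapping.lookup (w ?uC) x"
    using others by (simp add: q_def lookup_mult_single_right)
  finally show False
    using x by (simp add: in_keys_iff)
qed

lemma GJ_edge_if_linearly_presented:
  fixes E :: "'v::finite set set"
  assumes "simple_graph E" and "E \<noteq> {}"
    and "linearly_presented (Ic E :: ('v, 'k::field) mpoly set)"
    and C: "minimal_vertex_cover E C"
  shows "\<exists>D. GJ_edge E C D"
proof (rule ccontr)
  let ?u = "\<lambda>C. Poly_Mapping.single (set_exponent C) 1 :: ('v, 'k) mpoly"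
  assume "\<nexists>D. GJ_edge E C D"
  then have isolated: "\<forall>D. \<not> GJ_edge E C D" by blast
  obtain U :: "('v, 'k) mpoly set" and d where U: "finite U" "ideal_gen U = Ic E" "\<forall>u\<in>U. is_monomial u"
    "\<forall>u\<in>U. homogeneous d u"
    and linear: "syzygies U = module_span {a \<in> syzygies U. \<forall>u\<in>U. homogeneous 1 (a u)}"
    using assms(3) unfolding linearly_presented_def minimally_generates_def by blast
  obtain C' where C': "minimal_vertex_cover E C'" "C' \<noteq> C"
    using exists_other_minimal_vertex_cover[OF assms(1,2)] by blast
  have mem: "?u C \<in> U" "?u C' \<in> U"
    using cover_monomial_mem_monomial_generators[OF U(2,3)] C C'(1) by blast+
  have "set_exponent C' \<noteq> set_exponent C"
    using C'(2) by (metis keys_set_exponent finite)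
  then have "?u C' \<noteq> ?u C"
    by (metis lookup_single_eq lookup_single_not_eq zero_neq_one)
  \<comment> \<open>the syzygy t^C' e_C - t^C e_C' is no combination of linear ones, which all vanish at e_C\<close>
  define s where "s u = (if u = ?u C then ?u C' else if u = ?u C' then - ?u C else 0)" for u
  have "(\<Sum>u\<in>U. s u * u) = s (?u C) * ?u C + s (?u C') * ?u C'"
    using U(1) mem \<open>?u C' \<noteq> ?u C\<close>
    by (simp add: sum.remove[of U "?u C"] sum.remove[of "U - {?u C}" "?u C'"] s_def sum.neutral)
  also have "\<dots> = 0"
    using \<open>?u C' \<noteq> ?u C\<close> by (simp add: s_def mult.commute)
  finally have "(\<Sum>u\<in>U. s u * u) = 0" .
  moreover have "\<forall>u. u \<notin> U \<longrightarrow> s u = 0"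
    using mem by (simp add: s_def)
  ultimately have "s \<in> syzygies U"
    unfolding syzygies_def by (intro CollectI conjI)
  then have "s \<in> module_span {a \<in> syzygies U. \<forall>u\<in>U. homogeneous 1 (a u)}"
    using linear by blast
  then obtain F c where F: "F \<subseteq> {a \<in> syzygies U. \<forall>u\<in>U. homogeneous 1 (a u)}"
    and s_eq: "s = (\<lambda>u. \<Sum>w\<in>F. c w * w u)"
    unfolding module_span_def by blast
  have "c w * w (?u C) = 0" if "w \<in> F" for w
    using linear_syzygy_vanishes_at_isolated_cover[OF U(2,1,3,4) C isolated, of w] that F by auto
  then have "s (?u C) = 0"
    unfolding s_eq by (intro sum.neutral) blast
  then have "Poly_Mapping.lookup (?u C') (set_exponent C') = 0"
    by (simp add: s_def)
  then show False
    by simp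
qed

theorem theorem3p5:
  fixes E :: "('v::finite) set set"
  assumes "simple_graph E" and "E \<noteq> {}" and "unmixed E"
  defines "J \<equiv> (Ic E :: (('v \<Rightarrow>\<^sub>0 nat) \<Rightarrow>\<^sub>0 'k::field) set)"
  shows "(\<forall>C D. minimal_vertex_cover E C \<longrightarrow> minimal_vertex_cover E D \<longrightarrow>
            (GJ_edge E C D \<longleftrightarrow>
              (\<exists>k l. {k, l} \<in> E \<and> k \<in> C \<and> l \<notin> C \<and> (C - {k}) \<union> {l} = D)))
       \<and> (\<forall>C. minimal_vertex_cover E C \<longrightarrow> (\<exists>D. GJ_edge E C D) \<longrightarrow> exchange_property E C)
       \<and> ((\<exists>C D. GJ_edge E C D) \<longleftrightarrow> vnumber J = alpha0 E - 1)
       \<and> (linearly_presented J \<longrightarrow>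
            (\<forall>C. minimal_vertex_cover E C \<longrightarrow> exchange_property E C) \<and> vnumber J = alpha0 E - 1)"
proof -
  have vnumber: "(\<exists>C D. GJ_edge E C D) \<longleftrightarrow> vnumber J = alpha0 E - 1"
    unfolding J_def by (rule vnumber_Ic_eq_iff_GJ_edge[OF assms(1-3)])
  have linear: "(\<forall>C. minimal_vertex_cover E C \<longrightarrow> exchange_property E C) \<and> vnumber J = alpha0 E - 1"
    if "linearly_presented J"
  proof -
    have edge: "\<exists>D. GJ_edge E C D" if "minimal_vertex_cover E C" for C
      using GJ_edge_if_linearly_presented[OF assms(1,2)] \<open>linearly_presented J\<close> that
      unfolding J_def by blast
    obtain C where "minimal_vertex_cover E C"
      using obtain_minimal_vertex_cover_subset[OF finite vertex_cover_Compl_singleton[OF assms(1)]] .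
    with edge vnumber exchange_property_if_GJ_edge[OF assms(1,3)] show ?thesis
      by blast
  qed
  show ?thesis
    using GJ_edge_iff_exchange[OF assms(1,3)] exchange_property_if_GJ_edge[OF assms(1,3)]
      vnumber linear by blast
qed

end
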